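(* Let $\mathbf d$ be a graphical degree sequence on $[n]$ and let $H_1$ and $H_2$ be two edge-disjoint graphs on $[n]$; write $h=e(H_1)$. (a) If \[ \mathfrak{R}(\mathbf d, H_1,H_2):=\frac{6J(\mathbf d)+2\Delta(8+2\Delta(H_2))}{M-2e(H_1)}+ \frac{4e(H_2)\Delta^2}{(M-2e(H_1))^2}\le 1, \] then \[ \mathbb P\big(H_1^+\mid H_2^- \big) \le \prod_{i=1}^n (d_i)_{d_i^{H_1}}\cdot \prod_{j=1}^{h}\frac{1+\mathfrak{R}(\mathbf d, H_1, H_2)}{ M-2j+2}. \] (b) If \[ \mathfrak{r}(\mathbf d,H_1, H_2):=\frac{2J(\mathbf d)+6\Delta+2\Delta(H_2)\Delta+ \Delta_{\partial(H_1)}^2}{M-2e(H_1)} \le 1, \] then \[ \mathbb P\big(H_1^+\mid H_2^- \big)\ge \prod_{i=1}^n (d_i)_{d_i^{H_1}}\cdot \prod_{j=1}^{h}\frac{1-\mathfrak{r}(\mathbf d, H_1, H_2)}{ M-2j+2}. \]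
   Context: For a sequence $\mathbf d=(d_1,\ldots,d_n)$ of nonnegative integers, $\mathcal G(n,\mathbf d)$ denotes a uniformly random simple graph on $[n]$ in which vertex $i$ has degree $d_i$; $\mathbf d$ is graphical if such a graph exists. $\Delta=\max_i d_i$, $M=\sum_i d_i$, $J(\mathbf d)$ is the sum of the $\Delta$ largest entries of $\mathbf d$, and for $S\subseteq[n]$, $\Delta_S=\max_{i\in S}d_i$. For a graph $H$ on $[n]$, $e(H)$ is its number of edges, $\Delta(H)$ its maximum degree, $d^H_i$ the degree of $i$ in $H$, and $\partial(H)$ the set of vertices incident to at least one edge of $H$. Graphs on $[n]$ are identified with edge sets; disjoint means edge-disjoint. $H^+$ is the event $H\subseteq\mathcal G(n,\mathbf d)$ and $H^-$ the event that $\mathcal G(n,\mathbf d)$ contains no edge of $H$. $(x)_k=x(x-1)\cdots(x-k+1)$ denotes the falling factorial. *)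

theory Defs
  imports Complex_Main
begin

text \<open>Simple graphs on the vertex set [n] = {1..n}, identified with their edge sets:
  sets of 2-element subsets of {1..n}.\<close>

definition all_edges :: "nat \<Rightarrow> nat set set" where
  "all_edges n = {e. e \<subseteq> {1..n} \<and> card e = 2}"

definition graph_on :: "nat \<Rightarrow> nat set set \<Rightarrow> bool" where
  "graph_on n G \<longleftrightarrow> G \<subseteq> all_edges n"

definition vdeg :: "nat set set \<Rightarrow> nat \<Rightarrow> nat" where
  "vdeg G i = card {e \<in> G. i \<in> e}"

definition num_edges :: "nat set set \<Rightarrow> nat" where
  "num_edges G = card G"

definition max_deg :: "nat \<Rightarrow> nat set set \<Rightarrow> nat" where
  "max_deg n G = Max (insert 0 (vdeg G ` {1..n}))"

definition touched :: "nat set set \<Rightarrow> nat set" where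
  "touched G = \<Union> G"

definition graphs_deg :: "nat \<Rightarrow> (nat \<Rightarrow> nat) \<Rightarrow> nat set set set" where
  "graphs_deg n d = {G. graph_on n G \<and> (\<forall>i\<in>{1..n}. vdeg G i = d i)}"

definition graphical :: "nat \<Rightarrow> (nat \<Rightarrow> nat) \<Rightarrow> bool" where
  "graphical n d \<longleftrightarrow> graphs_deg n d \<noteq> {}"

definition dmax :: "nat \<Rightarrow> (nat \<Rightarrow> nat) \<Rightarrow> nat" where
  "dmax n d = Max (insert 0 (d ` {1..n}))"

definition dmax_on :: "(nat \<Rightarrow> nat) \<Rightarrow> nat set \<Rightarrow> nat" where
  "dmax_on d S = Max (insert 0 (d ` S))"

definition dsum :: "nat \<Rightarrow> (nat \<Rightarrow> nat) \<Rightarrow> nat" where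
  "dsum n d = (\<Sum>i\<in>{1..n}. d i)"

definition Jd :: "nat \<Rightarrow> (nat \<Rightarrow> nat) \<Rightarrow> nat" where
  "Jd n d = sum_list (take (dmax n d) (rev (sort (map d [1..<n+1]))))"

definition ffall :: "nat \<Rightarrow> nat \<Rightarrow> real" where
  "ffall x k = (\<Prod>i<k. real x - real i)"

definition cond_prob :: "nat \<Rightarrow> (nat \<Rightarrow> nat) \<Rightarrow> nat set set \<Rightarrow> nat set set \<Rightarrow> real" where
  "cond_prob n d H1 H2 =
     real (card {G \<in> graphs_deg n d. H1 \<subseteq> G \<and> G \<inter> H2 = {}})
     / real (card {G \<in> graphs_deg n d. G \<inter> H2 = {}})"

definition bigR :: "nat \<Rightarrow> (nat \<Rightarrow> nat) \<Rightarrow> nat set set \<Rightarrow> nat set set \<Rightarrow> real" where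
  "bigR n d H1 H2 =
     (6 * real (Jd n d) + 2 * real (dmax n d) * (8 + 2 * real (max_deg n H2)))
       / (real (dsum n d) - 2 * real (num_edges H1))
   + 4 * real (num_edges H2) * real (dmax n d) ^ 2
       / (real (dsum n d) - 2 * real (num_edges H1)) ^ 2"

definition smallr :: "nat \<Rightarrow> (nat \<Rightarrow> nat) \<Rightarrow> nat set set \<Rightarrow> nat set set \<Rightarrow> real" where
  "smallr n d H1 H2 =
     (2 * real (Jd n d) + 6 * real (dmax n d) + 2 * real (max_deg n H2) * real (dmax n d)
        + real (dmax_on d (touched H1)) ^ 2)
       / (real (dsum n d) - 2 * real (num_edges H1))"

end

theory Submission
  imports Defs "HOL-Library.Multiset"
begin

(* Switching argument. Let K be a subset of H1 and ab an edge of H1 outside K, and split the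
  graphs with degrees d that contain K and avoid H2 into A (containing ab) and B (not).
  Replacing ab and a suitable edge uv of G - K by au and bv maps A into B: every graph in A
  admits at least M_K - 2 beta such switchings, where M_K = M - 2|K| counts the arcs of G - K and
  beta = Delta + J(d) + Delta(H2) Delta bounds the arcs excluded at each end, while every graph
  in B is reached at most w = (d_a - deg_K a)(d_b - deg_K b) times. Conversely, replacing ax, by
  and uv by ab, xu and yv maps B into A, with at least w (M_K - 2 beta) switchings from each
  graph and at most M_K^2 into each. Hence |A| / (|A| + |B|) = w (1 +- eps) / M_K, and adding the
  edges of H1 one at a time the factors w telescope into the falling factorials.
  bigR and smallr enter only through 4 beta <= bigR (M - 2 e(H1)) and
  2 beta + Delta_{touched H1}^2 <= smallr (M - 2 e(H1)); their constants are larger than needed. *)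

section \<open>Sums of largest entries\<close>

lemma sum_mset_le_sum_largest:
  fixes A B :: "'a :: {linorder, canonically_ordered_monoid_add} multiset"
  assumes "A \<subseteq># B" and "size A \<le> k"
  shows "sum_mset A \<le> sum_list (take k (rev (sorted_list_of_multiset B)))"
  using assms
proof (induction B arbitrary: A k rule: multiset_induct_max)
  case empty
  then show ?case by simp
next
  case (add x B)
  show ?case
  proof (cases "A = {#}")
    case False
    then obtain k' where k: "k = Suc k'"
      using add.prems(2) by (cases k) auto
    have largest: "sum_list (take k (rev (sorted_list_of_multiset (add_mset x B))))
        = x + sum_list (take k' (rev (sorted_list_of_multiset B)))"
      using add.hyps k by (simp add: sorted_insort_is_snoc)
    obtain y where y: "y \<in># A" "y \<le> x" "A - {#y#} \<subseteq># B"
    proof (cases "x \<in># A")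
      case True
      then show ?thesis
        using add.prems(1) by (intro that[of x]) (auto simp: subset_eq_diff_conv)
    next
      case False
      then have "A \<subseteq># B"
        using add.prems(1) by (metis diff_single_trivial subset_eq_diff_conv add_mset_add_single)
      moreover obtain y where "y \<in># A" using \<open>A \<noteq> {#}\<close> by blast
      ultimately show ?thesis
        using add.hyps by (intro that[of y]) (auto dest: mset_subset_eqD
            intro: subset_mset.order_trans[OF diff_subset_eq_self])
    qed
    have "sum_mset (A - {#y#}) \<le> sum_list (take k' (rev (sorted_list_of_multiset B)))"
      using y add.prems(2) k by (intro add.IH) (auto simp: size_Diff_singleton)
    then show ?thesis
      using y sum_mset.remove[OF y(1)] largest by (simp add: add_mono)
  qed simp
qed

lemma sum_le_Jd:
  assumes "X \<subseteq> {1..n}" and "card X \<le> dmax n d"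
  shows "(\<Sum>u\<in>X. d u) \<le> Jd n d"
proof -
  have "mset (map d [1..<n+1]) = image_mset d (mset_set {1..n})"
    by (metis Suc_eq_plus1 atLeastLessThanSuc_atLeastAtMost mset_map mset_upt)
  moreover have "image_mset d (mset_set X) \<subseteq># image_mset d (mset_set {1..n})"
    using assms(1) by (intro image_mset_subseteq_mono) (simp add: finite_subset)
  ultimately have "sum_mset (image_mset d (mset_set X))
      \<le> sum_list (take (dmax n d) (rev (sorted_list_of_multiset (mset (map d [1..<n+1])))))"
    using assms(2) by (intro sum_mset_le_sum_largest) simp_all
  then show ?thesis
    by (simp only: Jd_def sorted_list_of_multiset_mset sum_unfold_sum_mset)
qed

section \<open>Graphs as sets of edges\<close>

definition nbrs :: "nat set set \<Rightarrow> nat \<Rightarrow> nat set" where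
  "nbrs F x = {y. {x, y} \<in> F}"

definition arcs :: "nat set set \<Rightarrow> (nat \<times> nat) set" where
  "arcs F = {(x, y). {x, y} \<in> F}"

lemma finite_all_edges: "finite (all_edges n)"
  by (rule finite_subset[of _ "Pow {1..n}"]) (auto simp: all_edges_def)

lemma finite_graph: "F \<subseteq> all_edges n \<Longrightarrow> finite F"
  by (rule finite_subset[OF _ finite_all_edges])

lemma doubleton_in_all_edges_iff:
  "{x, y} \<in> all_edges n \<longleftrightarrow> x \<noteq> y \<and> x \<in> {1..n} \<and> y \<in> {1..n}"
  by (auto simp: all_edges_def card_insert_if)

lemma in_all_edges_iff:
  "e \<in> all_edges n \<longleftrightarrow> (\<exists>x y. e = {x, y} \<and> x \<noteq> y \<and> x \<in> {1..n} \<and> y \<in> {1..n})"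
  unfolding all_edges_def card_2_iff by fastforce

lemma nbrs_subset:
  assumes "F \<subseteq> all_edges n"
  shows "nbrs F x \<subseteq> {1..n}"
proof
  fix y assume "y \<in> nbrs F x"
  then have "{x, y} \<in> all_edges n"
    using assms by (auto simp: nbrs_def)
  then show "y \<in> {1..n}"
    by (simp add: doubleton_in_all_edges_iff)
qed

lemma finite_nbrs: "F \<subseteq> all_edges n \<Longrightarrow> finite (nbrs F x)"
  by (rule finite_subset[OF nbrs_subset]) auto

lemma card_nbrs:
  assumes "F \<subseteq> all_edges n"
  shows "card (nbrs F x) = vdeg F x"
proof -
  have "bij_betw (\<lambda>y. {x, y}) (nbrs F x) {e \<in> F. x \<in> e}"
  proof (rule bij_betwI')
    fix e assume e: "e \<in> {e \<in> F. x \<in> e}"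
    then obtain p q where "e = {p, q}"
      using assms in_all_edges_iff by blast
    with e show "\<exists>y\<in>nbrs F x. e = {x, y}"
      by (auto simp: nbrs_def insert_commute)
  qed (use assms in \<open>auto simp: nbrs_def doubleton_eq_iff all_edges_def\<close>)
  then show ?thesis
    unfolding vdeg_def by (rule bij_betw_same_card)
qed

lemma arcs_in_range:
  "F \<subseteq> all_edges n \<Longrightarrow> (x, y) \<in> arcs F \<Longrightarrow> x \<noteq> y \<and> x \<in> {1..n} \<and> y \<in> {1..n}"
  unfolding arcs_def using doubleton_in_all_edges_iff by blast

lemma finite_arcs: "F \<subseteq> all_edges n \<Longrightarrow> finite (arcs F)"
  by (rule finite_subset[of _ "{1..n} \<times> {1..n}"]) (auto dest: arcs_in_range)

lemma card_arcs_fst_in: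
  assumes "F \<subseteq> all_edges n" and "finite X"
  shows "card {p \<in> arcs F. fst p \<in> X} = (\<Sum>u\<in>X. vdeg F u)"
proof -
  have "{p \<in> arcs F. fst p \<in> X} = Sigma X (nbrs F)"
    by (auto simp: arcs_def nbrs_def)
  then show ?thesis
    using assms by (simp add: finite_nbrs card_nbrs)
qed

lemma card_arcs_snd_in:
  assumes "F \<subseteq> all_edges n" and "finite X"
  shows "card {p \<in> arcs F. snd p \<in> X} = (\<Sum>u\<in>X. vdeg F u)"
proof -
  have "{p \<in> arcs F. snd p \<in> X} = prod.swap ` {p \<in> arcs F. fst p \<in> X}"
    by (auto simp: arcs_def insert_commute image_iff)
  then show ?thesis
    using card_arcs_fst_in[OF assms] by (simp add: card_image swap_inj_on)
qed

lemma vdeg_eq_0_outside: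
  assumes "F \<subseteq> all_edges n" and "u \<notin> {1..n}"
  shows "vdeg F u = 0"
proof -
  have "{e \<in> F. u \<in> e} = {}"
    using assms by (force simp: all_edges_def)
  then show ?thesis
    unfolding vdeg_def by (simp only: card.empty)
qed

lemma vdeg_eq_sum: "finite F \<Longrightarrow> vdeg F u = (\<Sum>e\<in>F. of_bool (u \<in> e))"
  by (simp add: vdeg_def sum.inter_filter[symmetric] of_bool_def)

lemma handshake:
  assumes "F \<subseteq> all_edges n"
  shows "(\<Sum>u\<in>{1..n}. vdeg F u) = 2 * card F"
proof -
  have "(\<Sum>u\<in>{1..n}. vdeg F u) = (\<Sum>u\<in>{1..n}. \<Sum>e\<in>F. of_bool (u \<in> e))"
    using finite_graph[OF assms] by (simp add: vdeg_eq_sum)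
  also have "\<dots> = (\<Sum>e\<in>F. card e)"
  proof (subst sum.swap, rule sum.cong)
    fix e assume "e \<in> F"
    then have "e \<subseteq> {1..n}"
      using assms by (auto simp: all_edges_def)
    then show "(\<Sum>u\<in>{1..n}. of_bool (u \<in> e)) = card e"
      by (simp add: of_bool_def sum.If_cases Int_absorb1)
  qed simp
  also have "\<dots> = (\<Sum>e\<in>F. 2)"
    using assms by (intro sum.cong) (auto simp: all_edges_def)
  finally show ?thesis
    by simp
qed

lemma card_arcs:
  assumes "F \<subseteq> all_edges n"
  shows "card (arcs F) = 2 * card F"
proof -
  have "{p \<in> arcs F. fst p \<in> {1..n}} = arcs F"
    using assms by (auto dest: arcs_in_range)
  then show ?thesis
    using card_arcs_fst_in[OF assms, of "{1..n}"] handshake[OF assms] by simp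
qed

lemma vdeg_mono: "F \<subseteq> G \<Longrightarrow> finite G \<Longrightarrow> vdeg F u \<le> vdeg G u"
  unfolding vdeg_def by (rule card_mono) auto

lemma vdeg_Diff: "K \<subseteq> G \<Longrightarrow> finite G \<Longrightarrow> vdeg (G - K) u = vdeg G u - vdeg K u"
  unfolding vdeg_def
  by (subst card_Diff_subset[symmetric]) (auto intro: arg_cong[where f = card] finite_subset)

lemma vdeg_insert: "finite K \<Longrightarrow> e \<notin> K \<Longrightarrow> vdeg (insert e K) u = vdeg K u + of_bool (u \<in> e)"
  by (simp add: vdeg_eq_sum)

lemma vdeg_two_doubletons:
  assumes "{a, b} \<noteq> {x, y}" and "a \<noteq> b" and "x \<noteq> y"
  shows "vdeg {{a, b}, {x, y}} u = of_bool (u = a) + of_bool (u = b) + of_bool (u = x) + of_bool (u = y)"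
  using assms by (auto simp: vdeg_insert vdeg_def[of "{}"])

lemma vdeg_three_doubletons:
  assumes "{a, b} \<noteq> {x, y}" and "{a, b} \<noteq> {p, q}" and "{x, y} \<noteq> {p, q}"
    and "a \<noteq> b" and "x \<noteq> y" and "p \<noteq> q"
  shows "vdeg {{a, b}, {x, y}, {p, q}} u
    = of_bool (u = a) + of_bool (u = b) + of_bool (u = x) + of_bool (u = y) + of_bool (u = p) + of_bool (u = q)"
  using assms by (auto simp: vdeg_insert vdeg_def[of "{}"])

lemma vdeg_replace_edges:
  assumes "finite G" and "R \<subseteq> G" and "A \<inter> G = {}" and "finite A"
    and "vdeg R u = vdeg A u"
  shows "vdeg (G - R \<union> A) u = vdeg G u"
proof -
  have "vdeg (G - R \<union> A) u = vdeg (G - R) u + vdeg A u"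
    unfolding vdeg_def using assms(1-4)
    by (subst card_Un_disjoint[symmetric]) (auto intro: arg_cong[where f = card])
  then show ?thesis
    using assms vdeg_Diff[of R G u] vdeg_mono[of R G u] by simp
qed

lemma vdeg_le_degree:
  assumes "G \<in> graphs_deg n d" and "F \<subseteq> G"
  shows "vdeg F u \<le> d u"
proof -
  have G: "G \<subseteq> all_edges n" "\<forall>i\<in>{1..n}. vdeg G i = d i"
    using assms(1) by (auto simp: graphs_deg_def graph_on_def)
  show ?thesis
  proof (cases "u \<in> {1..n}")
    case True
    then have "vdeg G u = d u"
      using G(2) by blast
    then show ?thesis
      using vdeg_mono[OF assms(2) finite_graph[OF G(1)]] by metis
  next
    case False
    then show ?thesis using vdeg_eq_0_outside[of F n u] assms(2) G(1) by simp
  qed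
qed

lemma dmax_ge: "u \<in> {1..n} \<Longrightarrow> d u \<le> dmax n d"
  unfolding dmax_def by (intro Max_ge) auto

lemma le_dmax_on_touched:
  assumes "graph_on n H" and "e \<in> H" and "u \<in> e"
  shows "d u \<le> dmax_on d (touched H)"
proof -
  have "touched H \<subseteq> {1..n}"
    using assms(1) by (auto simp: touched_def graph_on_def all_edges_def)
  then have "finite (touched H)"
    by (rule finite_subset) simp
  moreover have "u \<in> touched H"
    using assms(2,3) by (auto simp: touched_def)
  ultimately show ?thesis
    unfolding dmax_on_def by (intro Max_ge) auto
qed

lemma vdeg_le_dmax:
  assumes "G \<in> graphs_deg n d" and "F \<subseteq> G"
  shows "vdeg F u \<le> dmax n d"
proof (cases "u \<in> {1..n}")
  case True
  then show ?thesis using vdeg_le_degree[OF assms, of u] dmax_ge[of u n d] by simp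
next
  case False
  have "F \<subseteq> all_edges n"
    using assms by (auto simp: graphs_deg_def graph_on_def)
  then show ?thesis
    using vdeg_eq_0_outside False by simp
qed

lemma vdeg_le_max_deg:
  assumes "H \<subseteq> all_edges n"
  shows "vdeg H u \<le> max_deg n H"
proof (cases "u \<in> {1..n}")
  case True
  then show ?thesis
    unfolding max_deg_def by (intro Max_ge) auto
next
  case False
  then show ?thesis
    using vdeg_eq_0_outside[OF assms] by simp
qed

lemma dsum_eq_twice_card:
  assumes "G \<in> graphs_deg n d"
  shows "dsum n d = 2 * card G"
proof -
  have G: "G \<subseteq> all_edges n" "\<forall>i\<in>{1..n}. vdeg G i = d i"
    using assms by (auto simp: graphs_deg_def graph_on_def)
  have "dsum n d = (\<Sum>u\<in>{1..n}. vdeg G u)"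
    unfolding dsum_def using G(2) by simp
  also have "\<dots> = 2 * card G"
    by (rule handshake[OF G(1)])
  finally show ?thesis .
qed

lemma replace_edges_in_graphs_deg:
  assumes "G \<in> graphs_deg n d" and "R \<subseteq> G" and "A \<inter> G = {}" and "A \<subseteq> all_edges n"
    and "\<And>u. vdeg R u = vdeg A u"
  shows "G - R \<union> A \<in> graphs_deg n d"
proof -
  have G: "G \<subseteq> all_edges n" "\<forall>i\<in>{1..n}. vdeg G i = d i"
    using assms(1) by (auto simp: graphs_deg_def graph_on_def)
  have "vdeg (G - R \<union> A) u = vdeg G u" for u
    using finite_graph[OF G(1)] assms(2,3) finite_graph[OF assms(4)] assms(5) by (rule vdeg_replace_edges)
  then show ?thesis
    using G assms(4) by (auto simp: graphs_deg_def graph_on_def)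
qed

section \<open>Double counting\<close>

lemma double_counting_le:
  fixes \<alpha> \<beta> :: real
  assumes "finite X" and "finite Y"
    and "\<And>x. x \<in> X \<Longrightarrow> finite (T x)" and "\<And>x. x \<in> X \<Longrightarrow> \<alpha> \<le> card (T x)"
    and "\<And>x t. x \<in> X \<Longrightarrow> t \<in> T x \<Longrightarrow> f x t \<in> Y"
    and "\<And>y. y \<in> Y \<Longrightarrow> card {(x, t) \<in> Sigma X T. f x t = y} \<le> \<beta>"
  shows "card X * \<alpha> \<le> card Y * \<beta>"
proof -
  have fibers: "card (Sigma X T) = (\<Sum>y\<in>Y. card {(x, t) \<in> Sigma X T. f x t = y})"
  proof -
    have "(\<Sum>y\<in>Y. \<Sum>q | q \<in> Sigma X T \<and> case_prod f q = y. 1) = (\<Sum>q\<in>Sigma X T. 1::nat)"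
      using assms(1,2,3,5) by (intro sum.group) auto
    moreover have "{q. q \<in> Sigma X T \<and> case_prod f q = y} = {(x, t) \<in> Sigma X T. f x t = y}" for y
      by auto
    ultimately show ?thesis
      by simp
  qed
  have "card X * \<alpha> \<le> (\<Sum>x\<in>X. card (T x))"
    using sum_mono[of X "\<lambda>_. \<alpha>" "\<lambda>x. real (card (T x))"] assms(4) by (simp add: mult.commute)
  also have "\<dots> = card (Sigma X T)"
    using assms(1,3) by simp
  also have "\<dots> = (\<Sum>y\<in>Y. card {(x, t) \<in> Sigma X T. f x t = y})"
    unfolding fibers of_nat_sum ..
  also have "\<dots> \<le> card Y * \<beta>"
    using sum_mono[of Y _ "\<lambda>_. \<beta>"] assms(6) by simp
  finally show ?thesis .
qed

lemma switching_ratio_le: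
  fixes A B w s R M :: real
  assumes "0 \<le> A" "0 \<le> B" "0 \<le> w" "0 \<le> s" "0 \<le> R" "R \<le> 1" "0 < M"
    and "2 * s \<le> R * M" and "A * (M - s) \<le> B * w"
  shows "A * M \<le> (A + B) * w * (1 + R)"
proof -
  have "s \<le> R * (M - s)"
    using assms(4-8) mult_left_mono[of R 1 s] by (simp add: algebra_simps)
  then have "A * (M - s) * s \<le> B * w * (R * (M - s))"
    using assms by (meson mult_mono mult_nonneg_nonneg)
  moreover have "0 < M - s"
    using assms(4-8) mult_left_le_one_le[of M R] by linarith
  ultimately have "A * s \<le> B * w * R"
    by (simp add: mult.commute mult.left_commute)
  then have "A * M \<le> B * w * (1 + R)"
    using assms(9) by (simp add: algebra_simps)
  also have "\<dots> \<le> (A + B) * w * (1 + R)"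
    using assms by (intro mult_right_mono) auto
  finally show ?thesis .
qed

lemma switching_ratio_ge:
  fixes A B w s r M D :: real
  assumes "0 \<le> A" "0 \<le> B" "0 \<le> w" "w \<le> D" "0 \<le> s" "0 < M"
    and "s + D \<le> r * M" and "r \<le> 1" and "B * (w * (M - s)) \<le> A * M\<^sup>2"
  shows "(A + B) * w * (1 - r) \<le> A * M"
proof -
  define t u where "t = s / M" and "u = w / M"
  have tu: "0 \<le> t" "0 \<le> u" "t + u \<le> r"
    using assms by (auto simp: t_def u_def add_divide_distrib[symmetric] pos_divide_le_eq)
  have u_shrink: "u * (1 - r) \<le> u" and "0 \<le> t * u * (1 - r)"
    using tu assms(8) mult_left_mono[of "1 - r" 1 u] by auto
  moreover have "(1 - t) * (1 - u * (1 - r)) = 1 - t - u * (1 - r) + t * u * (1 - r)"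
    by (simp add: algebra_simps)
  ultimately have "1 - r \<le> (1 - t) * (1 - u * (1 - r))"
    using tu by linarith
  then have "B * u * (1 - r) \<le> B * u * (1 - t) * (1 - u * (1 - r))"
    using assms(2) tu by (simp add: mult_left_mono mult.assoc)
  also have "\<dots> \<le> A * (1 - u * (1 - r))"
  proof (rule mult_right_mono)
    show "B * u * (1 - t) \<le> A"
      using assms(6,9) by (simp add: t_def u_def field_simps power2_eq_square)
    show "0 \<le> 1 - u * (1 - r)"
      using tu assms(8) u_shrink by linarith
  qed
  finally have "(A + B) * u * (1 - r) \<le> A"
    by (simp add: algebra_simps)
  then have "M * ((A + B) * u * (1 - r)) \<le> M * A"
    using assms(6) by simp
  moreover have "M * ((A + B) * u * (1 - r)) = (A + B) * w * (1 - r)"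
    using assms(6) by (simp add: u_def)
  ultimately show ?thesis
    by (metis mult.commute)
qed

section \<open>Switchings\<close>

definition graphs_with_without :: "nat \<Rightarrow> (nat \<Rightarrow> nat) \<Rightarrow> nat set set \<Rightarrow> nat set set \<Rightarrow> nat set set set" where
  "graphs_with_without n d K H = {G \<in> graphs_deg n d. K \<subseteq> G \<and> G \<inter> H = {}}"

definition forbidden_bound :: "nat \<Rightarrow> (nat \<Rightarrow> nat) \<Rightarrow> nat set set \<Rightarrow> nat" where
  "forbidden_bound n d H = dmax n d + Jd n d + max_deg n H * dmax n d"

lemma finite_graphs_with_without: "finite (graphs_with_without n d K H)"
  by (rule finite_subset[of _ "Pow (all_edges n)"])
    (auto simp: graphs_with_without_def graphs_deg_def graph_on_def finite_all_edges)

locale switching =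
  fixes n :: nat and d :: "nat \<Rightarrow> nat" and H K :: "nat set set" and a b :: nat
  assumes H_graph: "H \<subseteq> all_edges n"
    and ab_edge: "{a, b} \<in> all_edges n" and ab_notin_K: "{a, b} \<notin> K" and ab_notin_H: "{a, b} \<notin> H"
begin

abbreviation admissible :: "nat set set set" where
  "admissible \<equiv> graphs_with_without n d K H"

abbreviation with_ab :: "nat set set set" where
  "with_ab \<equiv> graphs_with_without n d (insert {a, b} K) H"

definition without_ab :: "nat set set set" where
  "without_ab = {G \<in> admissible. {a, b} \<notin> G}"

definition residual_total :: real where
  "residual_total = real (dsum n d) - 2 * real (card K)"

definition residual_deg :: "nat \<Rightarrow> nat" where
  "residual_deg u = d u - vdeg K u"

definition forbidden :: "nat set set \<Rightarrow> nat \<Rightarrow> nat set" where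
  "forbidden G x = insert x (nbrs G x \<union> nbrs H x)"

(* (u, v) \<in> free_arcs G x y: replacing uv by xu and yv keeps the graph simple and disjoint from H. *)
definition free_arcs :: "nat set set \<Rightarrow> nat \<Rightarrow> nat \<Rightarrow> (nat \<times> nat) set" where
  "free_arcs G x y = {(u, v) \<in> arcs (G - K). u \<notin> forbidden G x \<and> v \<notin> forbidden G y}"

lemma a_neq_b: "a \<noteq> b" and a_in_range: "a \<in> {1..n}" and b_in_range: "b \<in> {1..n}"
  using ab_edge by (simp_all add: doubleton_in_all_edges_iff)

lemma admissibleD:
  assumes "G \<in> admissible"
  shows "G \<in> graphs_deg n d" "G \<subseteq> all_edges n" "K \<subseteq> G" "G \<inter> H = {}"
  using assms by (auto simp: graphs_with_without_def graphs_deg_def graph_on_def)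

lemma with_ab_iff: "G \<in> with_ab \<longleftrightarrow> G \<in> admissible \<and> {a, b} \<in> G"
  by (auto simp: graphs_with_without_def)

lemma card_admissible: "card admissible = card with_ab + card without_ab"
proof -
  have "admissible = with_ab \<union> without_ab" and "with_ab \<inter> without_ab = {}"
    by (auto simp: with_ab_iff without_ab_def)
  then show ?thesis
    using finite_graphs_with_without by (metis card_Un_disjoint finite_Un)
qed

lemma finite_without_ab: "finite without_ab"
  using finite_graphs_with_without[of n d K H] by (simp add: without_ab_def)

lemma card_arcs_Diff_K:
  assumes "G \<in> admissible"
  shows "real (card (arcs (G - K))) = residual_total"
proof -
  note G = admissibleD[OF assms]
  have "card (arcs (G - K)) = 2 * (card G - card K)"
    using card_arcs[of "G - K" n] G finite_graph[OF G(2)] by (auto simp: card_Diff_subset finite_subset)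
  moreover have "card K \<le> card G"
    using G finite_graph[OF G(2)] by (simp add: card_mono)
  ultimately show ?thesis
    using dsum_eq_twice_card[OF G(1)] by (simp add: residual_total_def)
qed

lemma card_nbrs_Diff_K:
  assumes "G \<in> admissible" and "u \<in> {1..n}"
  shows "card (nbrs (G - K) u) = residual_deg u"
proof -
  note G = admissibleD[OF assms(1)]
  have "vdeg G u = d u"
    using G(1) assms(2) by (simp add: graphs_deg_def)
  then show ?thesis
    using card_nbrs[of "G - K" n u] vdeg_Diff[OF G(3) finite_graph[OF G(2)]] G(2)
    by (auto simp: residual_deg_def)
qed

lemma sum_vdeg_forbidden_le:
  assumes "G \<in> admissible" and "F \<subseteq> G"
  shows "(\<Sum>u\<in>forbidden G x. vdeg F u) \<le> forbidden_bound n d H"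
proof -
  note G = admissibleD[OF assms(1)]
  have fin: "finite (nbrs G x)" "finite (nbrs H x)"
    using finite_nbrs[OF G(2)] finite_nbrs[OF H_graph] by auto
  have "(\<Sum>u\<in>forbidden G x. vdeg F u) \<le> vdeg F x + (\<Sum>u\<in>nbrs G x \<union> nbrs H x. vdeg F u)"
    using fin by (simp add: forbidden_def sum.insert_if)
  also have "(\<Sum>u\<in>nbrs G x \<union> nbrs H x. vdeg F u) \<le> (\<Sum>u\<in>nbrs G x. vdeg F u) + (\<Sum>u\<in>nbrs H x. vdeg F u)"
    by (metis le_add1 sum.union_inter fin)
  also have "vdeg F x \<le> dmax n d"
    by (rule vdeg_le_dmax[OF G(1) assms(2)])
  also have "(\<Sum>u\<in>nbrs G x. vdeg F u) \<le> (\<Sum>u\<in>nbrs G x. d u)"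
    by (intro sum_mono vdeg_le_degree[OF G(1) assms(2)])
  also have "\<dots> \<le> Jd n d"
    using nbrs_subset[OF G(2)] card_nbrs[OF G(2)] vdeg_le_dmax[OF G(1), of G x]
    by (intro sum_le_Jd) auto
  also have "(\<Sum>u\<in>nbrs H x. vdeg F u) \<le> (\<Sum>u\<in>nbrs H x. dmax n d)"
    by (intro sum_mono vdeg_le_dmax[OF G(1) assms(2)])
  also have "\<dots> \<le> max_deg n H * dmax n d"
    using card_nbrs[OF H_graph] vdeg_le_max_deg[OF H_graph] by simp
  finally show ?thesis
    by (simp add: forbidden_bound_def)
qed

lemma finite_free_arcs: "G \<in> admissible \<Longrightarrow> finite (free_arcs G x y)"
  by (rule finite_subset[of _ "arcs (G - K)"])
    (auto simp: free_arcs_def intro: finite_arcs dest: admissibleD(2))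

lemma card_free_arcs_ge:
  assumes "G \<in> admissible"
  shows "residual_total - 2 * real (forbidden_bound n d H) \<le> card (free_arcs G x y)"
proof -
  note G = admissibleD[OF assms]
  have F: "G - K \<subseteq> all_edges n" "G - K \<subseteq> G"
    using G by auto
  define Bx where "Bx = {p \<in> arcs (G - K). fst p \<in> forbidden G x}"
  define By where "By = {p \<in> arcs (G - K). snd p \<in> forbidden G y}"
  have fin: "finite (forbidden G z)" for z
    using finite_nbrs[OF G(2)] finite_nbrs[OF H_graph] by (simp add: forbidden_def)
  have "card Bx \<le> forbidden_bound n d H" "card By \<le> forbidden_bound n d H"
    using sum_vdeg_forbidden_le[OF assms F(2)] card_arcs_fst_in[OF F(1) fin] card_arcs_snd_in[OF F(1) fin]
    by (simp_all add: Bx_def By_def)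
  then have "real (card Bx) \<le> forbidden_bound n d H" "real (card By) \<le> forbidden_bound n d H"
    by simp_all
  moreover have "free_arcs G x y = arcs (G - K) - Bx - By"
    by (auto simp: free_arcs_def Bx_def By_def)
  then have "card (arcs (G - K)) \<le> card (free_arcs G x y) + card Bx + card By"
    using diff_card_le_card_Diff[of Bx "arcs (G - K)"] diff_card_le_card_Diff[of By "arcs (G - K) - Bx"]
      finite_arcs[OF F(1)] by (simp add: Bx_def By_def)
  then have "real (card (arcs (G - K))) \<le> card (free_arcs G x y) + real (card Bx) + card By"
    by (metis of_nat_add of_nat_le_iff)
  ultimately show ?thesis
    using card_arcs_Diff_K[OF assms] by linarith
qed

lemma replace_edges_admissible:
  assumes "G \<in> admissible" and "R \<subseteq> G - K" and "A \<inter> G = {}" and "A \<inter> H = {}"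
    and "A \<subseteq> all_edges n" and "\<And>u. vdeg R u = vdeg A u"
  shows "G - R \<union> A \<in> admissible"
  using replace_edges_in_graphs_deg[of G n d R A] admissibleD[OF assms(1)] assms(2-6)
  by (auto simp: graphs_with_without_def)

definition switch_out :: "nat set set \<Rightarrow> nat \<times> nat \<Rightarrow> nat set set" where
  "switch_out G = (\<lambda>(u, v). G - {{a, b}, {u, v}} \<union> {{a, u}, {b, v}})"

lemma free_arcs_abD:
  assumes "G \<in> with_ab" and "(u, v) \<in> free_arcs G a b"
  shows "{u, v} \<in> G - K" "u \<noteq> v" "u \<in> {1..n}" "v \<in> {1..n}"
    "u \<noteq> a" "u \<noteq> b" "v \<noteq> a" "v \<noteq> b" "{a, u} \<notin> G" "{b, v} \<notin> G" "{a, u} \<notin> H" "{b, v} \<notin> H"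
proof -
  have G: "G \<in> admissible" "{a, b} \<in> G"
    using assms(1) with_ab_iff by auto
  show "{u, v} \<in> G - K"
    using assms(2) by (auto simp: free_arcs_def arcs_def)
  then have "{u, v} \<in> all_edges n"
    using admissibleD(2)[OF G(1)] by blast
  then show "u \<noteq> v" "u \<in> {1..n}" "v \<in> {1..n}"
    by (simp_all add: doubleton_in_all_edges_iff)
  have "b \<in> nbrs G a" "a \<in> nbrs G b"
    using G(2) by (auto simp: nbrs_def insert_commute)
  then show "u \<noteq> a" "u \<noteq> b" "v \<noteq> a" "v \<noteq> b" "{a, u} \<notin> G" "{b, v} \<notin> G" "{a, u} \<notin> H" "{b, v} \<notin> H"
    using assms(2) by (auto simp: free_arcs_def forbidden_def nbrs_def)
qed

lemma switch_out_mem: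
  assumes "G \<in> with_ab" and "(u, v) \<in> free_arcs G a b"
  shows "switch_out G (u, v) \<in> without_ab"
proof -
  note uv = free_arcs_abD[OF assms]
  have G: "G \<in> admissible" "{a, b} \<in> G"
    using assms(1) with_ab_iff by auto
  have deg: "vdeg {{a, b}, {u, v}} z = vdeg {{a, u}, {b, v}} z" for z
  proof -
    have "{a, b} \<noteq> {u, v}" "{a, u} \<noteq> {b, v}"
      using uv a_neq_b by (auto simp: doubleton_eq_iff)
    then show ?thesis
      using uv a_neq_b by (simp only: vdeg_two_doubletons ac_simps not_False_eq_True)
  qed
  have "G - {{a, b}, {u, v}} \<union> {{a, u}, {b, v}} \<in> admissible"
  proof (rule replace_edges_admissible[OF G(1) _ _ _ _ deg])
    show "{{a, b}, {u, v}} \<subseteq> G - K"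
      using G(2) ab_notin_K uv(1) by simp
    show "{{a, u}, {b, v}} \<inter> G = {}" "{{a, u}, {b, v}} \<inter> H = {}"
      using uv(9-12) by auto
    show "{{a, u}, {b, v}} \<subseteq> all_edges n"
      using uv(2-8) a_in_range b_in_range by (auto simp: doubleton_in_all_edges_iff)
  qed
  then have "switch_out G (u, v) \<in> admissible"
    by (simp add: switch_out_def)
  moreover have "{a, b} \<notin> switch_out G (u, v)"
    using uv by (auto simp: switch_out_def doubleton_eq_iff)
  ultimately show ?thesis
    by (simp add: without_ab_def)
qed

lemma switch_out_fiber:
  assumes "G' \<in> without_ab"
  shows "card {(G, p) \<in> Sigma with_ab (\<lambda>G. free_arcs G a b). switch_out G p = G'}
    \<le> residual_deg a * residual_deg b"
proof -
  let ?fiber = "{(G, p) \<in> Sigma with_ab (\<lambda>G. free_arcs G a b). switch_out G p = G'}"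
  have G': "G' \<in> admissible"
    using assms by (simp add: without_ab_def)
  have recover: "G = G' - {{a, u}, {b, v}} \<union> {{a, b}, {u, v}}" and
    ends: "u \<in> nbrs (G' - K) a" "v \<in> nbrs (G' - K) b"
    if "(G, (u, v)) \<in> ?fiber" for G u v
  proof -
    from that have "G \<in> with_ab" "(u, v) \<in> free_arcs G a b" "G' = switch_out G (u, v)"
      by auto
    with free_arcs_abD[OF this(1,2)] with_ab_iff[of G]
    show "G = G' - {{a, u}, {b, v}} \<union> {{a, b}, {u, v}}"
      "u \<in> nbrs (G' - K) a" "v \<in> nbrs (G' - K) b"
      by (auto simp: switch_out_def nbrs_def dest: admissibleD(3))
  qed
  have "inj_on snd ?fiber"
    by (rule inj_onI) (metis (no_types, lifting) recover prod.collapse)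
  moreover have "snd ` ?fiber \<subseteq> nbrs (G' - K) a \<times> nbrs (G' - K) b"
    using ends by fastforce
  moreover have "finite (nbrs (G' - K) a \<times> nbrs (G' - K) b)"
    using admissibleD(2)[OF G'] by (auto intro: finite_nbrs)
  ultimately have "card ?fiber \<le> card (nbrs (G' - K) a \<times> nbrs (G' - K) b)"
    by (rule card_inj_on_le)
  then show ?thesis
    using card_nbrs_Diff_K[OF G' a_in_range] card_nbrs_Diff_K[OF G' b_in_range]
    by (simp add: card_cartesian_product)
qed

definition switch_in_choices :: "nat set set \<Rightarrow> ((nat \<times> nat) \<times> nat \<times> nat) set" where
  "switch_in_choices G = Sigma (nbrs (G - K) a \<times> nbrs (G - K) b) (\<lambda>(x, y). free_arcs G x y)"

definition switch_in :: "nat set set \<Rightarrow> (nat \<times> nat) \<times> nat \<times> nat \<Rightarrow> nat set set" where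
  "switch_in G = (\<lambda>((x, y), u, v). G - {{a, x}, {b, y}, {u, v}} \<union> {{a, b}, {x, u}, {y, v}})"

lemma switch_in_choicesD:
  assumes "G \<in> without_ab" and "((x, y), u, v) \<in> switch_in_choices G"
  shows "{a, x} \<in> G - K" "{b, y} \<in> G - K" "{u, v} \<in> G - K"
    "a \<noteq> x" "b \<noteq> y" "u \<noteq> v" "x \<noteq> b" "y \<noteq> a" "x \<noteq> u" "y \<noteq> v"
    "x \<in> {1..n}" "y \<in> {1..n}" "u \<in> {1..n}" "v \<in> {1..n}"
    "{x, u} \<notin> G" "{y, v} \<notin> G" "{x, u} \<notin> H" "{y, v} \<notin> H"
proof -
  have G: "G \<in> admissible" "{a, b} \<notin> G"
    using assms(1) by (auto simp: without_ab_def)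
  have edges: "{a, x} \<in> G - K" "{b, y} \<in> G - K" "{u, v} \<in> G - K"
    using assms(2) by (auto simp: switch_in_choices_def free_arcs_def nbrs_def arcs_def)
  then show "{a, x} \<in> G - K" "{b, y} \<in> G - K" "{u, v} \<in> G - K"
    by auto
  have "{a, x} \<in> all_edges n" "{b, y} \<in> all_edges n" "{u, v} \<in> all_edges n"
    using edges admissibleD(2)[OF G(1)] by auto
  then show "a \<noteq> x" "b \<noteq> y" "u \<noteq> v" "x \<in> {1..n}" "y \<in> {1..n}" "u \<in> {1..n}" "v \<in> {1..n}"
    by (simp_all add: doubleton_in_all_edges_iff)
  show "x \<noteq> b" "y \<noteq> a"
    using edges G(2) by (auto simp: insert_commute)
  show "x \<noteq> u" "y \<noteq> v" "{x, u} \<notin> G" "{y, v} \<notin> G" "{x, u} \<notin> H" "{y, v} \<notin> H"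
    using assms(2) by (auto simp: switch_in_choices_def free_arcs_def forbidden_def nbrs_def)
qed

lemma switch_in_mem:
  assumes "G \<in> without_ab" and "q \<in> switch_in_choices G"
  shows "switch_in G q \<in> with_ab"
proof -
  obtain x y u v where q: "q = ((x, y), u, v)"
    by (metis prod.exhaust)
  note c = switch_in_choicesD[OF assms(1) assms(2)[unfolded q]]
  have G: "G \<in> admissible" "{a, b} \<notin> G"
    using assms(1) by (auto simp: without_ab_def)
  have "{a, x} \<noteq> {b, y}" "{a, b} \<noteq> {x, u}" "{a, b} \<noteq> {y, v}"
    using a_neq_b c(4,5,7,8) by (auto simp: doubleton_eq_iff)
  moreover have "{a, x} \<noteq> {u, v}" "{b, y} \<noteq> {u, v}" "{x, u} \<noteq> {y, v}"
    using c(1,2,3,6,9,10,15,16) by (auto simp: doubleton_eq_iff insert_commute)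
  ultimately have deg: "vdeg {{a, x}, {b, y}, {u, v}} z = vdeg {{a, b}, {x, u}, {y, v}} z" for z
    using c(4-6,9,10) a_neq_b by (simp only: vdeg_three_doubletons ac_simps not_False_eq_True)
  have "G - {{a, x}, {b, y}, {u, v}} \<union> {{a, b}, {x, u}, {y, v}} \<in> admissible"
  proof (rule replace_edges_admissible[OF G(1) _ _ _ _ deg])
    show "{{a, x}, {b, y}, {u, v}} \<subseteq> G - K"
      using c(1-3) by simp
    show "{{a, b}, {x, u}, {y, v}} \<inter> G = {}" "{{a, b}, {x, u}, {y, v}} \<inter> H = {}"
      using G(2) c(15-18) ab_notin_H by auto
    show "{{a, b}, {x, u}, {y, v}} \<subseteq> all_edges n"
      using ab_edge c(9-14) by (simp add: doubleton_in_all_edges_iff)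
  qed
  then show ?thesis
    by (simp add: q switch_in_def with_ab_iff)
qed

lemma switch_in_fiber:
  assumes "G' \<in> with_ab"
  shows "card {(G, q) \<in> Sigma without_ab switch_in_choices. switch_in G q = G'} \<le> residual_total ^ 2"
proof -
  let ?fiber = "{(G, q) \<in> Sigma without_ab switch_in_choices. switch_in G q = G'}"
  let ?code = "\<lambda>(G :: nat set set, (x :: nat, y :: nat), (u :: nat, v :: nat)). ((x, u), (y, v))"
  have G': "G' \<in> admissible"
    using assms with_ab_iff by auto
  have recover: "G = G' - {{a, b}, {x, u}, {y, v}} \<union> {{a, x}, {b, y}, {u, v}}" and
    code: "(x, u) \<in> arcs (G' - K)" "(y, v) \<in> arcs (G' - K)"
    if "(G, ((x, y), u, v)) \<in> ?fiber" for G x y u v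
  proof -
    from that have "G \<in> without_ab" "((x, y), u, v) \<in> switch_in_choices G"
      "G' = switch_in G ((x, y), u, v)"
      by auto
    with switch_in_choicesD[OF this(1,2)] admissibleD(3)[of G]
    show "G = G' - {{a, b}, {x, u}, {y, v}} \<union> {{a, x}, {b, y}, {u, v}}"
      "(x, u) \<in> arcs (G' - K)" "(y, v) \<in> arcs (G' - K)"
      by (auto simp: switch_in_def without_ab_def arcs_def)
  qed
  have "inj_on ?code ?fiber"
  proof (rule inj_onI)
    fix p p' assume fib: "p \<in> ?fiber" "p' \<in> ?fiber" and same: "?code p = ?code p'"
    obtain G x y u v where p: "p = (G, (x, y), u, v)"
      by (metis prod.exhaust)
    obtain G2 x2 y2 u2 v2 where p': "p' = (G2, (x2, y2), u2, v2)"
      by (metis prod.exhaust)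
    show "p = p'"
      using recover(1)[OF fib(1)[unfolded p]] recover(1)[OF fib(2)[unfolded p']] same
      by (simp add: p p')
  qed
  moreover have "?code ` ?fiber \<subseteq> arcs (G' - K) \<times> arcs (G' - K)"
    using code by fastforce
  moreover have "finite (arcs (G' - K) \<times> arcs (G' - K))"
    using admissibleD(2)[OF G'] by (auto intro: finite_arcs)
  ultimately have "card ?fiber \<le> card (arcs (G' - K) \<times> arcs (G' - K))"
    by (rule card_inj_on_le)
  then have "card ?fiber \<le> card (arcs (G' - K)) * card (arcs (G' - K))"
    by (simp add: card_cartesian_product)
  then have "real (card ?fiber) \<le> real (card (arcs (G' - K))) * real (card (arcs (G' - K)))"
    by (simp only: of_nat_mult[symmetric] of_nat_le_iff)
  then show ?thesis
    using card_arcs_Diff_K[OF G'] by (simp add: power2_eq_square)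
qed

lemma card_switch_in_choices_ge:
  assumes "G \<in> without_ab"
  shows "residual_deg a * residual_deg b * (residual_total - 2 * real (forbidden_bound n d H))
    \<le> card (switch_in_choices G)"
proof -
  have G: "G \<in> admissible"
    using assms by (simp add: without_ab_def)
  let ?N = "nbrs (G - K) a \<times> nbrs (G - K) b"
  have fin: "finite ?N"
    using admissibleD(2)[OF G] by (auto intro: finite_nbrs)
  have "residual_deg a * residual_deg b * (residual_total - 2 * real (forbidden_bound n d H))
      = (\<Sum>xy\<in>?N. residual_total - 2 * real (forbidden_bound n d H))"
    using card_nbrs_Diff_K[OF G a_in_range] card_nbrs_Diff_K[OF G b_in_range]
    by (simp add: card_cartesian_product)
  also have "\<dots> \<le> (\<Sum>(x, y)\<in>?N. real (card (free_arcs G x y)))"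
    using card_free_arcs_ge[OF G] by (intro sum_mono) auto
  also have "\<dots> = card (switch_in_choices G)"
    using fin finite_free_arcs[OF G]
    by (simp add: switch_in_choices_def split_def)
  finally show ?thesis .
qed

lemma with_ab_mult_le:
  "card with_ab * (residual_total - 2 * real (forbidden_bound n d H))
    \<le> card without_ab * real (residual_deg a * residual_deg b)"
proof (rule double_counting_le[where T = "\<lambda>G. free_arcs G a b" and f = switch_out])
  fix G assume "G \<in> with_ab"
  then have "G \<in> admissible"
    by (simp add: with_ab_iff)
  then show "finite (free_arcs G a b)" "residual_total - 2 * real (forbidden_bound n d H) \<le> card (free_arcs G a b)"
    by (simp_all add: finite_free_arcs card_free_arcs_ge)
qed (auto simp: finite_graphs_with_without finite_without_ab switch_out_mem switch_out_fiber[simplified]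
    simp del: of_nat_mult)

lemma without_ab_mult_le:
  "card without_ab * (residual_deg a * residual_deg b * (residual_total - 2 * real (forbidden_bound n d H)))
    \<le> card with_ab * residual_total\<^sup>2"
proof (rule double_counting_le[where T = switch_in_choices and f = switch_in])
  fix G assume G: "G \<in> without_ab"
  then have "G \<in> admissible"
    by (simp add: without_ab_def)
  then show "finite (switch_in_choices G)"
    unfolding switch_in_choices_def
    by (intro finite_SigmaI) (auto simp: finite_free_arcs dest: admissibleD(2) intro: finite_nbrs)
  show "residual_deg a * residual_deg b * (residual_total - 2 * real (forbidden_bound n d H))
      \<le> card (switch_in_choices G)"
    using card_switch_in_choices_ge[OF G] by simp
qed (auto simp: finite_graphs_with_without finite_without_ab switch_in_mem switch_in_fiber[simplified])

lemma card_with_ab_le: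
  fixes R :: real
  assumes "0 \<le> R" and "R \<le> 1" and "0 < residual_total" and "4 * real (forbidden_bound n d H) \<le> R * residual_total"
  shows "card with_ab \<le> card admissible * (residual_deg a * residual_deg b * (1 + R) / residual_total)"
proof -
  have "card with_ab * residual_total
      \<le> (real (card with_ab) + card without_ab) * real (residual_deg a * residual_deg b) * (1 + R)"
    using assms with_ab_mult_le by (intro switching_ratio_le) auto
  then show ?thesis
    using assms(3) by (simp add: card_admissible field_simps)
qed

lemma card_with_ab_ge:
  fixes r :: real
  assumes "0 < residual_total" and "r \<le> 1" and "d a \<le> D" and "d b \<le> D"
    and "2 * real (forbidden_bound n d H) + real D ^ 2 \<le> r * residual_total"
  shows "card admissible * (residual_deg a * residual_deg b * (1 - r) / residual_total) \<le> card with_ab"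
proof -
  have "residual_deg a * residual_deg b \<le> D ^ 2"
    using assms(3,4) by (simp add: residual_deg_def power2_eq_square mult_le_mono)
  then have "real (residual_deg a) * real (residual_deg b) \<le> real D ^ 2"
    by (metis of_nat_le_iff of_nat_mult of_nat_power)
  then have "(real (card with_ab) + card without_ab) * real (residual_deg a * residual_deg b) * (1 - r)
      \<le> card with_ab * residual_total"
    using assms without_ab_mult_le
    by (intro switching_ratio_ge[where D = "real D ^ 2" and s = "2 * real (forbidden_bound n d H)"])
      auto
  then show ?thesis
    using assms(1) by (simp add: card_admissible field_simps)
qed

end

section \<open>Adding the edges of H1 one at a time\<close>

lemma ffall_0 [simp]: "ffall x 0 = 1"
  by (simp add: ffall_def)

(* With truncated subtraction this also holds for k > x, where both sides vanish. *)
lemma ffall_Suc: "ffall x (Suc k) = ffall x k * real (x - k)"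
proof (cases "k \<le> x")
  case True
  then show ?thesis
    by (simp add: ffall_def of_nat_diff)
next
  case False
  then have "ffall x k = 0"
    unfolding ffall_def by (intro prod_zero) auto
  with False show ?thesis
    by (simp add: ffall_def)
qed

definition product_bound :: "nat \<Rightarrow> (nat \<Rightarrow> nat) \<Rightarrow> real \<Rightarrow> nat set set \<Rightarrow> real" where
  "product_bound n d c K =
    (\<Prod>i\<in>{1..n}. ffall (d i) (vdeg K i)) * (\<Prod>j\<in>{1..card K}. c / (real (dsum n d) - 2 * real j + 2))"

lemma product_bound_empty [simp]: "product_bound n d c {} = 1"
  by (simp add: product_bound_def vdeg_def)

lemma product_bound_insert:
  assumes "finite K" and "e \<notin> K" and "e \<subseteq> {1..n}"
  shows "product_bound n d c (insert e K)
    = product_bound n d c K * (real (\<Prod>i\<in>e. d i - vdeg K i) * c / (real (dsum n d) - 2 * real (card K)))"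
proof -
  let ?r = "\<lambda>i. real (d i - vdeg K i)"
  have "(\<Prod>i\<in>{1..n}. ffall (d i) (vdeg (insert e K) i))
      = (\<Prod>i\<in>{1..n}. ffall (d i) (vdeg K i) * (if i \<in> e then ?r i else 1))"
    using assms(1,2) by (intro prod.cong) (simp_all add: vdeg_insert ffall_Suc)
  also have "\<dots> = (\<Prod>i\<in>{1..n}. ffall (d i) (vdeg K i)) * (\<Prod>i\<in>e. ?r i)"
    using assms(3) by (simp add: prod.distrib prod.If_cases Int_absorb1)
  finally show ?thesis
    using assms(1,2) by (simp add: product_bound_def algebra_simps)
qed

lemma telescoping_le:
  fixes N P :: "'a set \<Rightarrow> real" and q :: "'a set \<Rightarrow> 'a \<Rightarrow> real"
  assumes "finite H" and "P {} = 1"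
    and "\<And>K e. K \<subseteq> H \<Longrightarrow> e \<in> H \<Longrightarrow> e \<notin> K \<Longrightarrow> N (insert e K) \<le> N K * q K e"
    and "\<And>K e. K \<subseteq> H \<Longrightarrow> e \<in> H \<Longrightarrow> e \<notin> K \<Longrightarrow> 0 \<le> q K e"
    and "\<And>K e. K \<subseteq> H \<Longrightarrow> e \<in> H \<Longrightarrow> e \<notin> K \<Longrightarrow> P (insert e K) = P K * q K e"
  shows "N H \<le> N {} * P H"
proof -
  have "N K \<le> N {} * P K" if "K \<subseteq> H" for K
    using finite_subset[OF that assms(1)] that
  proof (induction K rule: finite_subset_induct')
    case (insert e K)
    then have "N (insert e K) \<le> N {} * P K * q K e"
      using assms(3,4) by (meson mult_right_mono order_trans)
    then show ?case
      using insert assms(5) by (simp add: mult.assoc)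
  qed (simp add: assms(2))
  then show ?thesis
    by simp
qed

lemma telescoping_ge:
  fixes N P :: "'a set \<Rightarrow> real" and q :: "'a set \<Rightarrow> 'a \<Rightarrow> real"
  assumes "finite H" and "P {} = 1"
    and "\<And>K e. K \<subseteq> H \<Longrightarrow> e \<in> H \<Longrightarrow> e \<notin> K \<Longrightarrow> N K * q K e \<le> N (insert e K)"
    and "\<And>K e. K \<subseteq> H \<Longrightarrow> e \<in> H \<Longrightarrow> e \<notin> K \<Longrightarrow> 0 \<le> q K e"
    and "\<And>K e. K \<subseteq> H \<Longrightarrow> e \<in> H \<Longrightarrow> e \<notin> K \<Longrightarrow> P (insert e K) = P K * q K e"
  shows "N {} * P H \<le> N H"
proof -
  have "N {} * P K \<le> N K" if "K \<subseteq> H" for K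
    using finite_subset[OF that assms(1)] that
  proof (induction K rule: finite_subset_induct')
    case (insert e K)
    then have "N {} * P K * q K e \<le> N (insert e K)"
      using assms(3,4) by (meson mult_right_mono order_trans)
    then show ?case
      using insert assms(5) by (simp add: mult.assoc)
  qed (simp add: assms(2))
  then show ?thesis
    by simp
qed

lemma switching_for_edge:
  assumes "graph_on n H1" and "graph_on n H2" and "H1 \<inter> H2 = {}"
    and "e \<in> H1" and "e \<notin> K"
  obtains a b where "e = {a, b}" and "switching n H2 K a b"
proof -
  have "e \<in> all_edges n"
    using assms(1,4) by (auto simp: graph_on_def)
  then obtain a b where "e = {a, b}"
    by (auto simp: in_all_edges_iff)
  with assms \<open>e \<in> all_edges n\<close> show thesis
    by (intro that[of a b]) (auto simp: switching_def graph_on_def)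
qed

lemma card_graphs_with_without_le:
  fixes R :: real
  assumes H1: "graph_on n H1" and H2: "graph_on n H2" and disj: "H1 \<inter> H2 = {}"
    and pos: "0 < real (dsum n d) - 2 * real (card H1)" and R: "0 \<le> R" "R \<le> 1"
    and bound: "4 * real (forbidden_bound n d H2) \<le> R * (real (dsum n d) - 2 * real (card H1))"
  shows "card (graphs_with_without n d H1 H2)
    \<le> card (graphs_with_without n d {} H2) * product_bound n d (1 + R) H1"
proof (rule telescoping_le[where N = "\<lambda>K. card (graphs_with_without n d K H2)"
      and q = "\<lambda>K e. real (\<Prod>i\<in>e. d i - vdeg K i) * (1 + R) / (real (dsum n d) - 2 * real (card K))"])
  have fin: "finite H1"
    using H1 by (auto simp: graph_on_def finite_graph)
  then show "finite H1" .
  fix K e assume K: "K \<subseteq> H1" "e \<in> H1" "e \<notin> K"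
  obtain a b where e: "e = {a, b}" and S: "switching n H2 K a b"
    using switching_for_edge[OF H1 H2 disj K(2,3)] .
  interpret switching n d H2 K a b
    by (rule S)
  have "card K < card H1"
    using fin K by (intro psubset_card_mono) auto
  then have total: "real (dsum n d) - 2 * real (card H1) + 2 \<le> residual_total"
    by (simp add: residual_total_def)
  have "0 < real (dsum n d) - 2 * real (card K)"
    using total pos by (simp add: residual_total_def)
  then show "0 \<le> real (\<Prod>i\<in>e. d i - vdeg K i) * (1 + R) / (real (dsum n d) - 2 * real (card K))"
    using R by (intro divide_nonneg_pos mult_nonneg_nonneg) (auto intro: prod_nonneg)
  have "R * (real (dsum n d) - 2 * real (card H1)) \<le> R * residual_total"
    using total R by (intro mult_left_mono) auto
  then have "card with_ab \<le> card admissible * (residual_deg a * residual_deg b * (1 + R) / residual_total)"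
    using R total pos bound by (intro card_with_ab_le) auto
  then show "card (graphs_with_without n d (insert e K) H2)
      \<le> card (graphs_with_without n d K H2)
        * (real (\<Prod>i\<in>e. d i - vdeg K i) * (1 + R) / (real (dsum n d) - 2 * real (card K)))"
    using a_neq_b by (simp add: e residual_deg_def residual_total_def)
  show "product_bound n d (1 + R) (insert e K)
      = product_bound n d (1 + R) K * (real (\<Prod>i\<in>e. d i - vdeg K i) * (1 + R) / (real (dsum n d) - 2 * real (card K)))"
    using finite_subset[OF K(1) fin] K(3) a_in_range b_in_range by (intro product_bound_insert) (auto simp: e)
qed simp

lemma card_graphs_with_without_ge:
  fixes r :: real
  assumes H1: "graph_on n H1" and H2: "graph_on n H2" and disj: "H1 \<inter> H2 = {}"
    and pos: "0 < real (dsum n d) - 2 * real (card H1)" and r: "r \<le> 1"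
    and bound: "2 * real (forbidden_bound n d H2) + real (dmax_on d (touched H1)) ^ 2
      \<le> r * (real (dsum n d) - 2 * real (card H1))"
  shows "card (graphs_with_without n d {} H2) * product_bound n d (1 - r) H1
    \<le> card (graphs_with_without n d H1 H2)"
proof (rule telescoping_ge[where N = "\<lambda>K. card (graphs_with_without n d K H2)"
      and q = "\<lambda>K e. real (\<Prod>i\<in>e. d i - vdeg K i) * (1 - r) / (real (dsum n d) - 2 * real (card K))"])
  have fin: "finite H1"
    using H1 by (auto simp: graph_on_def finite_graph)
  then show "finite H1" .
  have "0 \<le> 2 * real (forbidden_bound n d H2) + real (dmax_on d (touched H1)) ^ 2"
    by simp
  then have "0 \<le> r * (real (dsum n d) - 2 * real (card H1))"
    using bound by linarith
  then have r0: "0 \<le> r"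
    using pos by (simp add: zero_le_mult_iff)
  fix K e assume K: "K \<subseteq> H1" "e \<in> H1" "e \<notin> K"
  obtain a b where e: "e = {a, b}" and S: "switching n H2 K a b"
    using switching_for_edge[OF H1 H2 disj K(2,3)] .
  interpret switching n d H2 K a b
    by (rule S)
  have "card K < card H1"
    using fin K by (intro psubset_card_mono) auto
  then have total: "real (dsum n d) - 2 * real (card H1) + 2 \<le> residual_total"
    by (simp add: residual_total_def)
  have "0 < real (dsum n d) - 2 * real (card K)"
    using total pos by (simp add: residual_total_def)
  then show "0 \<le> real (\<Prod>i\<in>e. d i - vdeg K i) * (1 - r) / (real (dsum n d) - 2 * real (card K))"
    using r by (intro divide_nonneg_pos mult_nonneg_nonneg) (auto intro: prod_nonneg)
  have "d a \<le> dmax_on d (touched H1)" "d b \<le> dmax_on d (touched H1)"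
    using le_dmax_on_touched[OF H1 K(2)] by (simp_all add: e)
  moreover have "r * (real (dsum n d) - 2 * real (card H1)) \<le> r * residual_total"
    using total r0 by (intro mult_left_mono) auto
  ultimately have "card admissible * (residual_deg a * residual_deg b * (1 - r) / residual_total) \<le> card with_ab"
    using r total pos bound by (intro card_with_ab_ge) auto
  then show "card (graphs_with_without n d K H2)
        * (real (\<Prod>i\<in>e. d i - vdeg K i) * (1 - r) / (real (dsum n d) - 2 * real (card K)))
      \<le> card (graphs_with_without n d (insert e K) H2)"
    using a_neq_b by (simp add: e residual_deg_def residual_total_def)
  show "product_bound n d (1 - r) (insert e K)
      = product_bound n d (1 - r) K * (real (\<Prod>i\<in>e. d i - vdeg K i) * (1 - r) / (real (dsum n d) - 2 * real (card K)))"
    using finite_subset[OF K(1) fin] K(3) a_in_range b_in_range by (intro product_bound_insert) (auto simp: e)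
qed simp

lemma forbidden_bound_le_bigR:
  assumes "0 < real (dsum n d) - 2 * real (card H1)"
  shows "0 \<le> bigR n d H1 H2"
    and "4 * real (forbidden_bound n d H2) \<le> bigR n d H1 H2 * (real (dsum n d) - 2 * real (card H1))"
proof -
  define D where "D = real (dsum n d) - 2 * real (card H1)"
  define X where "X = 6 * real (Jd n d) + 2 * real (dmax n d) * (8 + 2 * real (max_deg n H2))"
  have R: "bigR n d H1 H2 = X / D + 4 * real (num_edges H2) * real (dmax n d) ^ 2 / D ^ 2"
    by (simp add: bigR_def X_def D_def num_edges_def)
  have "0 \<le> X / D" "0 \<le> 4 * real (num_edges H2) * real (dmax n d) ^ 2 / D ^ 2"
    using assms by (simp_all add: X_def D_def)
  then show "0 \<le> bigR n d H1 H2"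
    unfolding R by linarith
  have "4 * real (forbidden_bound n d H2) \<le> X"
    by (simp add: forbidden_bound_def X_def algebra_simps)
  also have "X = X / D * D"
    using assms by (simp add: D_def)
  also have "\<dots> \<le> bigR n d H1 H2 * D"
    using assms \<open>0 \<le> 4 * real (num_edges H2) * real (dmax n d) ^ 2 / D ^ 2\<close>
    by (intro mult_right_mono) (simp_all add: R D_def)
  finally show "4 * real (forbidden_bound n d H2) \<le> bigR n d H1 H2 * (real (dsum n d) - 2 * real (card H1))"
    by (simp add: D_def)
qed

lemma forbidden_bound_le_smallr:
  assumes "0 < real (dsum n d) - 2 * real (card H1)"
  shows "2 * real (forbidden_bound n d H2) + real (dmax_on d (touched H1)) ^ 2
    \<le> smallr n d H1 H2 * (real (dsum n d) - 2 * real (card H1))"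
proof -
  have "smallr n d H1 H2 * (real (dsum n d) - 2 * real (card H1))
      = 2 * real (Jd n d) + 6 * real (dmax n d) + 2 * real (max_deg n H2) * real (dmax n d)
        + real (dmax_on d (touched H1)) ^ 2"
    using assms by (simp add: smallr_def num_edges_def)
  then show ?thesis
    by (simp add: forbidden_bound_def)
qed

theorem theorem1p4:
  fixes n :: nat and d :: "nat \<Rightarrow> nat" and H1 H2 :: "nat set set"
  assumes "graphical n d"
    and "graph_on n H1" and "graph_on n H2" and "H1 \<inter> H2 = {}"
    and "{G \<in> graphs_deg n d. G \<inter> H2 = {}} \<noteq> {}"
  shows
   "(real (dsum n d) - 2 * real (num_edges H1) > 0 \<and> bigR n d H1 H2 \<le> 1 \<longrightarrow>
      cond_prob n d H1 H2 \<le>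
        (\<Prod>i\<in>{1..n}. ffall (d i) (vdeg H1 i)) *
        (\<Prod>j\<in>{1..num_edges H1}. (1 + bigR n d H1 H2) / (real (dsum n d) - 2 * real j + 2)))
    \<and>
    (real (dsum n d) - 2 * real (num_edges H1) > 0 \<and> smallr n d H1 H2 \<le> 1 \<longrightarrow>
      cond_prob n d H1 H2 \<ge>
        (\<Prod>i\<in>{1..n}. ffall (d i) (vdeg H1 i)) *
        (\<Prod>j\<in>{1..num_edges H1}. (1 - smallr n d H1 H2) / (real (dsum n d) - 2 * real j + 2)))"
proof -
  let ?N = "\<lambda>K. real (card (graphs_with_without n d K H2))"
  have "0 < ?N {}"
    using assms(5) finite_graphs_with_without[of n d "{}" H2]
    by (simp add: graphs_with_without_def card_gt_0_iff)
  moreover have "cond_prob n d H1 H2 = ?N H1 / ?N {}"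
    by (simp add: cond_prob_def graphs_with_without_def)
  moreover have "?N H1 \<le> ?N {} * product_bound n d (1 + bigR n d H1 H2) H1"
    if "0 < real (dsum n d) - 2 * real (card H1)" and "bigR n d H1 H2 \<le> 1"
    using that assms(2-4) forbidden_bound_le_bigR[OF that(1)] by (intro card_graphs_with_without_le)
  moreover have "?N {} * product_bound n d (1 - smallr n d H1 H2) H1 \<le> ?N H1"
    if "0 < real (dsum n d) - 2 * real (card H1)" and "smallr n d H1 H2 \<le> 1"
    using that assms(2-4) forbidden_bound_le_smallr[OF that(1)] by (intro card_graphs_with_without_ge)
  ultimately show ?thesis
    by (auto simp: product_bound_def num_edges_def pos_divide_le_eq pos_le_divide_eq mult.commute)
qed

end
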